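(* In the MAD-HTLC game starting from its initial subgame (first of the $T$ rounds, with the deposit contract MH-Dep still redeemable), if Alice ($\mathcal{A}$) knows the preimage $\textit{pre}_a$ and $\mathcal{A}$ and Bob ($\mathcal{B}$) both follow the prescribed strategies, then the miners' best-response strategy leads to $\mathcal{A}$ redeeming MH-Dep for $v^{\text{dep}} - f^{\text{dep}}_{\mathcal{A}}$ tokens, and $\mathcal{B}$ redeeming MH-Col for $v^{\text{col}} - f^{\text{col}}_{\mathcal{B}}$ tokens.
   Context: Setting: a blockchain where in each of $T$ rounds $\mathcal{A}$ and $\mathcal{B}$ may publish transactions to a public mempool, then one miner (chosen with probability equal to her mining power) creates a block containing one transaction of her choice and collects its fee; there is always an unrelated mempool transaction paying the base fee $f$. Miners and users are rational, non-myopic, and maximize expected tokens at game end. MAD-HTLC is initiated in some block and consists of two contracts parameterized by hash digests $\textit{dig}_a = H(\textit{pre}_a)$, $\textit{dig}_b = H(\textit{pre}_b)$ (only $\mathcal{B}$ knows $\textit{pre}_b$) and timeout $T$. MH-Dep holds $v^{\text{dep}}$ tokens and is redeemable (i) by $\mathcal{A}$ with $\textit{pre}_a$ and her signature at any time, (ii) by $\mathcal{B}$ with $\textit{pre}_b$ and his signature after $T$ blocks, or (iii) by anyone presenting both $\textit{pre}_a$ and $\textit{pre}_b$. MH-Col holds $v^{\text{col}}$ tokens and is redeemable only after $T$ blocks, either by $\mathcal{B}$ with his signature or by anyone presenting both preimages. Prescribed strategy: if $\mathcal{A}$ knows $\textit{pre}_a$ she publishes, during the first $T-1$ rounds, a transaction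 redeeming MH-Dep via path (i) with fee $f^{\text{dep}}_{\mathcal{A}}$, where $f < f^{\text{dep}}_{\mathcal{A}} < v^{\text{dep}}$; if $\mathcal{A}$ published it, $\mathcal{B}$ publishes in round $T$ a transaction redeeming only MH-Col via his signature path with fee $f^{\text{col}}_{\mathcal{B}}$, where $f < f^{\text{col}}_{\mathcal{B}} < v^{\text{col}}$ (otherwise $\mathcal{B}$ redeems both contracts). The game is analyzed via subgame perfect equilibrium and backward induction. *)

theory Defs
  imports Main "HOL-Library.FuncSet" Complex_Main
begin

text \<open>
  Model of the MAD-HTLC game after Alice has published her transaction and
  with Alice and Bob fixed to their prescribed strategies.
  Rounds are numbered 1..T.  A history is the list of blocks created so far,
  each block recorded as (miner who created it, transaction included).
  Alice publishes tx_A (redeeming MH-Dep via path (i), fee fA) in round j,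
  with 1 <= j <= T-1; Bob publishes tx_B (redeeming MH-Col via his signature
  path, fee fB) in round T.  Nobody but Bob knows pre_b, so no miner can
  use the preimage-pair paths; hence a miner's only options are the unrelated
  transaction (base fee f), tx_A (once published and not yet included),
  and tx_B (in round T, not yet included).
\<close>

datatype mh_action = Unrelated | Incl_Dep | Incl_Col

type_synonym 'm mh_hist = "('m \<times> mh_action) list"

definition mh_fee :: "real \<Rightarrow> real \<Rightarrow> real \<Rightarrow> mh_action \<Rightarrow> real" where
  "mh_fee f fA fB a = (case a of Unrelated \<Rightarrow> f | Incl_Dep \<Rightarrow> fA | Incl_Col \<Rightarrow> fB)"

definition mh_avail :: "nat \<Rightarrow> nat \<Rightarrow> 'm mh_hist \<Rightarrow> mh_action \<Rightarrow> bool" where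
  "mh_avail T j h a \<longleftrightarrow>
     a = Unrelated
   \<or> (a = Incl_Dep \<and> j \<le> Suc (length h) \<and> Incl_Dep \<notin> snd ` set h)
   \<or> (a = Incl_Col \<and> Suc (length h) = T \<and> Incl_Col \<notin> snd ` set h)"

definition mh_valid_hist :: "'m set \<Rightarrow> nat \<Rightarrow> nat \<Rightarrow> 'm mh_hist \<Rightarrow> bool" where
  "mh_valid_hist M T j h \<longleftrightarrow> length h \<le> T \<and>
     (\<forall>k < length h. fst (h ! k) \<in> M \<and> mh_avail T j (take k h) (snd (h ! k)))"

definition mh_valid_strategy :: "'m set \<Rightarrow> nat \<Rightarrow> nat \<Rightarrow> ('m mh_hist \<Rightarrow> mh_action) \<Rightarrow> bool" where
  "mh_valid_strategy M T j s \<longleftrightarrow>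
     (\<forall>h. mh_valid_hist M T j h \<and> length h < T \<longrightarrow> mh_avail T j h (s h))"

text \<open>Expected tokens miner i collects in the remaining n rounds, starting at
  the chance node after history h (the round's miner not yet drawn),
  under strategy profile \<sigma>; pw m is the mining power of m.\<close>
fun mh_cont_util :: "(mh_action \<Rightarrow> real) \<Rightarrow> 'm set \<Rightarrow> ('m \<Rightarrow> real)
    \<Rightarrow> ('m \<Rightarrow> 'm mh_hist \<Rightarrow> mh_action) \<Rightarrow> 'm \<Rightarrow> nat \<Rightarrow> 'm mh_hist \<Rightarrow> real" where
  "mh_cont_util fe M pw \<sigma> i 0 h = 0"
| "mh_cont_util fe M pw \<sigma> i (Suc n) h =
     (\<Sum>m\<in>M. pw m * ((if m = i then fe (\<sigma> m h) else 0)
                     + mh_cont_util fe M pw \<sigma> i n (h @ [(m, \<sigma> m h)])))"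

text \<open>Expected tokens of miner i at the decision node where miner m has been
  selected to create the block of round length h + 1.\<close>
definition mh_dec_util :: "(mh_action \<Rightarrow> real) \<Rightarrow> 'm set \<Rightarrow> ('m \<Rightarrow> real) \<Rightarrow> nat
    \<Rightarrow> ('m \<Rightarrow> 'm mh_hist \<Rightarrow> mh_action) \<Rightarrow> 'm \<Rightarrow> 'm mh_hist \<Rightarrow> 'm \<Rightarrow> real" where
  "mh_dec_util fe M pw T \<sigma> i h m =
     (if m = i then fe (\<sigma> m h) else 0)
     + mh_cont_util fe M pw \<sigma> i (T - Suc (length h)) (h @ [(m, \<sigma> m h)])"

definition mh_SPE :: "real \<Rightarrow> real \<Rightarrow> real \<Rightarrow> 'm set \<Rightarrow> ('m \<Rightarrow> real) \<Rightarrow> nat \<Rightarrow> nat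
    \<Rightarrow> ('m \<Rightarrow> 'm mh_hist \<Rightarrow> mh_action) \<Rightarrow> bool" where
  "mh_SPE f fA fB M pw T j \<sigma> \<longleftrightarrow>
     (\<forall>m\<in>M. mh_valid_strategy M T j (\<sigma> m))
   \<and> (\<forall>h i \<tau>. mh_valid_hist M T j h \<and> length h < T \<and> i \<in> M \<and> mh_valid_strategy M T j \<tau> \<longrightarrow>
        mh_cont_util (mh_fee f fA fB) M pw (\<sigma>(i := \<tau>)) i (T - length h) h
          \<le> mh_cont_util (mh_fee f fA fB) M pw \<sigma> i (T - length h) h)
   \<and> (\<forall>h i m \<tau>. mh_valid_hist M T j h \<and> length h < T \<and> i \<in> M \<and> m \<in> M
          \<and> mh_valid_strategy M T j \<tau> \<longrightarrow>
        mh_dec_util (mh_fee f fA fB) M pw T (\<sigma>(i := \<tau>)) i h m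
          \<le> mh_dec_util (mh_fee f fA fB) M pw T \<sigma> i h m)"

fun mh_run :: "('m \<Rightarrow> 'm mh_hist \<Rightarrow> mh_action) \<Rightarrow> 'm mh_hist \<Rightarrow> 'm list \<Rightarrow> 'm mh_hist" where
  "mh_run \<sigma> h [] = h"
| "mh_run \<sigma> h (m # ms) = mh_run \<sigma> (h @ [(m, \<sigma> m h)]) ms"

text \<open>Tokens Alice / Bob hold at game end (under the prescribed strategies
  Alice can only obtain MH-Dep via tx_A, Bob only MH-Col via tx_B).\<close>
definition tokens_A :: "real \<Rightarrow> real \<Rightarrow> 'm mh_hist \<Rightarrow> real" where
  "tokens_A vdep fA H = (if Incl_Dep \<in> snd ` set H then vdep - fA else 0)"

definition tokens_B :: "real \<Rightarrow> real \<Rightarrow> 'm mh_hist \<Rightarrow> real" where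
  "tokens_B vcol fB H = (if Incl_Col \<in> snd ` set H then vcol - fB else 0)"

end

theory Submission
  imports Defs
begin

(* Backward induction over the last two rounds.  In round T every miner strictly prefers tx_B
   (fee fB > f) once tx_A is in the chain.  In round T - 1 with tx_A pending, including tx_A
   earns fA now and fB later with probability pw m, whereas skipping it earns f now and at best
   max fA fB later, again only with probability pw m <= 1; the former is strictly larger.  So
   every equilibrium play contains both transactions.  An equilibrium exists: the greedy profile
   (tx_A as soon as it is published, tx_B in round T) gives miner i exactly pw i times an explicit
   value, and the same one-shot comparison bounds every unilateral deviation by that value. *)

abbreviation dep_pending :: "'m mh_hist \<Rightarrow> bool" where
  "dep_pending h \<equiv> Incl_Dep \<notin> snd ` set h"

lemma Incl_Col_notin_valid_hist:
  assumes "mh_valid_hist M T j h" "length h < T"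
  shows "Incl_Col \<notin> snd ` set h"
proof
  assume "Incl_Col \<in> snd ` set h"
  then obtain k where k: "k < length h" "snd (h ! k) = Incl_Col"
    by (auto simp: in_set_conv_nth)
  then have "mh_avail T j (take k h) Incl_Col"
    using assms(1) unfolding mh_valid_hist_def by metis
  then show False
    using k assms(2) by (simp add: mh_avail_def)
qed

lemma mh_valid_hist_snoc:
  assumes "mh_valid_hist M T j h" "length h < T" "m \<in> M" "mh_avail T j h a"
  shows "mh_valid_hist M T j (h @ [(m, a)])"
  using assms unfolding mh_valid_hist_def by (auto simp: nth_append less_Suc_eq)

lemma mh_run_append: "mh_run \<sigma> h (xs @ ys) = mh_run \<sigma> (mh_run \<sigma> h xs) ys"
  by (induction xs arbitrary: h) auto

lemma length_mh_run: "length (mh_run \<sigma> h xs) = length h + length xs"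
  by (induction xs arbitrary: h) auto

lemma mh_valid_hist_mh_run:
  assumes "\<forall>m\<in>M. mh_valid_strategy M T j (\<sigma> m)" "set ms \<subseteq> M" "length ms \<le> T"
  shows "mh_valid_hist M T j (mh_run \<sigma> [] ms)"
  using assms(2,3)
proof (induction ms rule: rev_induct)
  case Nil
  show ?case by (simp add: mh_valid_hist_def)
next
  case (snoc m ms)
  let ?h = "mh_run \<sigma> [] ms"
  have "mh_valid_hist M T j ?h" "length ?h < T" "m \<in> M"
    using snoc by (auto simp: length_mh_run)
  moreover have "mh_avail T j ?h (\<sigma> m ?h)"
    using assms(1) calculation unfolding mh_valid_strategy_def by blast
  ultimately show ?case
    by (simp add: mh_run_append mh_valid_hist_snoc)
qed

locale mad_htlc_miners =
  fixes M :: "'m set" and pw :: "'m \<Rightarrow> real" and T j :: nat and f fA fB :: real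
  assumes finite_M: "finite M"
    and pw_pos: "\<And>m. m \<in> M \<Longrightarrow> 0 < pw m"
    and sum_pw: "(\<Sum>m\<in>M. pw m) = 1"
    and j_le: "j \<le> T - 1"
    and f_less_fA: "f < fA"
    and f_less_fB: "f < fB"
begin

abbreviation fee :: "mh_action \<Rightarrow> real" where
  "fee \<equiv> mh_fee f fA fB"

lemma pw_le_1: "m \<in> M \<Longrightarrow> pw m \<le> 1"
  using member_le_sum[of m M pw] finite_M pw_pos sum_pw by fastforce

lemma sum_pw_own_term:
  assumes "i \<in> M"
  shows "(\<Sum>m\<in>M. pw m * ((if m = i then x else 0) + y)) = pw i * x + y"
proof -
  have "(\<Sum>m\<in>M. pw m * ((if m = i then x else 0) + y))
      = (\<Sum>m\<in>M. if m = i then pw m * x else 0) + (\<Sum>m\<in>M. pw m) * y"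
    unfolding sum_distrib_right sum.distrib[symmetric] by (intro sum.cong) (auto simp: distrib_left)
  then show ?thesis
    using assms finite_M sum_pw by simp
qed

lemma mh_cont_util_Suc_0:
  assumes "i \<in> M"
  shows "mh_cont_util fee M pw \<sigma> i (Suc 0) h = pw i * fee (\<sigma> i h)"
proof -
  have "mh_cont_util fee M pw \<sigma> i (Suc 0) h
      = (\<Sum>m\<in>M. pw m * ((if m = i then fee (\<sigma> i h) else 0) + 0))"
    by (auto intro: sum.cong)
  then show ?thesis
    using sum_pw_own_term[OF assms, of "fee (\<sigma> i h)" 0] by simp
qed

definition greedy :: "'m mh_hist \<Rightarrow> mh_action" where
  "greedy h = (if Suc (length h) = T
      then (if dep_pending h \<and> fB < fA then Incl_Dep else Incl_Col)
      else if dep_pending h \<and> j \<le> Suc (length h) then Incl_Dep else Unrelated)"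

(* Greedy fees per unit of mining power with n rounds left: tx_A at once (with one round left
   only the larger of fA, fB), tx_B in round T, f otherwise; j <= T - 1 makes tx_A available
   in time. *)
definition greedy_value :: "nat \<Rightarrow> bool \<Rightarrow> real" where
  "greedy_value n pending = (if n = 0 then 0
     else if pending then (if n = 1 then max fA fB else fA + real (n - 2) * f + fB)
     else real (n - 1) * f + fB)"

abbreviation deviate :: "'m \<Rightarrow> ('m mh_hist \<Rightarrow> mh_action) \<Rightarrow> 'm \<Rightarrow> 'm mh_hist \<Rightarrow> mh_action" where
  "deviate i \<tau> \<equiv> (\<lambda>_. greedy)(i := \<tau>)"

lemma greedy_avail:
  assumes "mh_valid_hist M T j h" "length h < T"
  shows "mh_avail T j h (greedy h)"
  using Incl_Col_notin_valid_hist[OF assms] j_le by (auto simp: greedy_def mh_avail_def)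

lemma mh_valid_strategy_greedy: "mh_valid_strategy M T j greedy"
  unfolding mh_valid_strategy_def using greedy_avail by blast

lemma deviate_avail:
  assumes "mh_valid_strategy M T j \<tau>" "mh_valid_hist M T j h" "length h < T"
  shows "mh_avail T j h (deviate i \<tau> m h)"
  using assms greedy_avail unfolding mh_valid_strategy_def by auto

lemma greedy_value_step:
  assumes "length h < T"
  shows "fee (greedy h) + greedy_value (T - Suc (length h)) (dep_pending (h @ [(m, greedy h)]))
    = greedy_value (T - length h) (dep_pending h)"
proof -
  consider "Suc (length h) = T" | "Suc (Suc (length h)) = T" | "Suc (Suc (length h)) < T"
    using assms by linarith
  then show ?thesis
  proof cases
    case 3
    then obtain k where k: "T = length h + k + 3"
      by (intro that[of "T - length h - 3"]) simp
    show ?thesis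
      unfolding greedy_def greedy_value_def mh_fee_def using k by (simp add: ring_distribs)
  qed (use j_le in \<open>auto simp: greedy_def greedy_value_def mh_fee_def max_def\<close>)
qed

lemma Dep_now_beats_Dep_last:
  assumes "i \<in> M"
  shows "f + pw i * max fA fB < fA + pw i * fB"
proof (cases "fA \<le> fB")
  case True
  then show ?thesis using f_less_fA by (simp add: max_def)
next
  case False
  have "pw i * (fA - fB) \<le> fA - fB"
    using False pw_le_1[OF assms] by (simp add: mult_left_le_one_le)
  then show ?thesis using False f_less_fB by (simp add: max_def algebra_simps)
qed

lemma Dep_now_beats_Dep_later:
  assumes "i \<in> M"
  shows "f + pw i * (fA + r * f + fB) \<le> fA + pw i * ((r + 1) * f + fB)"
proof -
  have "pw i * (fA - f) \<le> fA - f"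
    using f_less_fA pw_le_1[OF assms] by (simp add: mult_left_le_one_le)
  then show ?thesis by (simp add: algebra_simps)
qed

lemma greedy_one_shot_optimal:
  assumes "length h < T" "mh_avail T j h a" "i \<in> M"
  shows "fee a + pw i * greedy_value (T - Suc (length h)) (dep_pending (h @ [(i, a)]))
    \<le> fee (greedy h) + pw i * greedy_value (T - Suc (length h)) (dep_pending (h @ [(i, greedy h)]))"
proof -
  consider "Suc (length h) = T" | "Suc (Suc (length h)) = T" | "Suc (Suc (length h)) < T"
    using assms by linarith
  then show ?thesis
  proof cases
    case 1
    then show ?thesis
      using assms(2) f_less_fA f_less_fB
      by (auto simp: greedy_def greedy_value_def mh_fee_def mh_avail_def)
  next
    case 2
    then show ?thesis
      using assms(2) j_le Dep_now_beats_Dep_last[OF assms(3)] f_less_fA f_less_fB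
      by (auto simp: greedy_def greedy_value_def mh_fee_def mh_avail_def)
  next
    case 3
    then obtain k where k: "T = length h + k + 3"
      by (intro that[of "T - length h - 3"]) simp
    have "f + pw i * (fA + real k * f + fB) \<le> fA + pw i * ((1 + real k) * f + fB)"
      using Dep_now_beats_Dep_later[OF assms(3), of "real k"] by (simp add: add.commute)
    then show ?thesis
      using assms(2) k
      unfolding greedy_def greedy_value_def mh_fee_def mh_avail_def by auto
  qed
qed

lemma greedy_expected_step:
  assumes "length h < T" "i \<in> M"
  shows "(\<Sum>m\<in>M. pw m * ((if m = i then fee (greedy h) else 0)
      + pw i * greedy_value (T - Suc (length h)) (dep_pending (h @ [(m, greedy h)]))))
    = pw i * greedy_value (T - length h) (dep_pending h)"
proof -
  have "(\<Sum>m\<in>M. pw m * ((if m = i then fee (greedy h) else 0)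
      + pw i * greedy_value (T - Suc (length h)) (dep_pending (h @ [(m, greedy h)]))))
    = pw i * (fee (greedy h)
      + greedy_value (T - Suc (length h)) (dep_pending (h @ [(i, greedy h)])))"
    using sum_pw_own_term[OF assms(2), of "fee (greedy h)"
        "pw i * greedy_value (T - Suc (length h)) (dep_pending (h @ [(i, greedy h)]))"]
    by (simp add: distrib_left)
  then show ?thesis
    unfolding greedy_value_step[OF assms(1)] .
qed

lemma deviate_one_shot_le:
  assumes "mh_valid_strategy M T j \<tau>" "mh_valid_hist M T j h" "length h < T" "i \<in> M"
  shows "(if m = i then fee (deviate i \<tau> m h) else 0)
      + pw i * greedy_value (T - Suc (length h)) (dep_pending (h @ [(m, deviate i \<tau> m h)]))
    \<le> (if m = i then fee (greedy h) else 0)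
      + pw i * greedy_value (T - Suc (length h)) (dep_pending (h @ [(m, greedy h)]))"
proof (cases "m = i")
  case True
  then show ?thesis
    using greedy_one_shot_optimal[OF assms(3) _ assms(4), of "\<tau> h"] deviate_avail[OF assms(1-3), of i i]
    by simp
qed simp

lemma mh_cont_util_greedy:
  assumes "i \<in> M"
  shows "length h + n = T \<Longrightarrow>
    mh_cont_util fee M pw (\<lambda>_. greedy) i n h = pw i * greedy_value n (dep_pending h)"
proof (induction n arbitrary: h)
  case 0
  then show ?case by (simp add: greedy_value_def)
next
  case (Suc n)
  then have n: "T - Suc (length h) = n" "T - length h = Suc n" "length h < T" by auto
  have "mh_cont_util fee M pw (\<lambda>_. greedy) i (Suc n) h
      = (\<Sum>m\<in>M. pw m * ((if m = i then fee (greedy h) else 0)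
          + pw i * greedy_value n (dep_pending (h @ [(m, greedy h)]))))"
    using Suc by simp
  also have "\<dots> = pw i * greedy_value (Suc n) (dep_pending h)"
    using greedy_expected_step[OF n(3) assms] unfolding n(1,2) .
  finally show ?case .
qed

lemma mh_cont_util_deviate_le:
  assumes "i \<in> M" "mh_valid_strategy M T j \<tau>"
  shows "mh_valid_hist M T j h \<Longrightarrow> length h + n = T \<Longrightarrow>
    mh_cont_util fee M pw (deviate i \<tau>) i n h \<le> pw i * greedy_value n (dep_pending h)"
proof (induction n arbitrary: h)
  case 0
  then show ?case by (simp add: greedy_value_def)
next
  case (Suc n)
  then have n: "T - Suc (length h) = n" "T - length h = Suc n" "length h < T" by auto
  have "mh_cont_util fee M pw (deviate i \<tau>) i (Suc n) h
      \<le> (\<Sum>m\<in>M. pw m * ((if m = i then fee (deviate i \<tau> m h) else 0)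
          + pw i * greedy_value n (dep_pending (h @ [(m, deviate i \<tau> m h)]))))"
    unfolding mh_cont_util.simps
  proof (intro sum_mono mult_left_mono add_left_mono)
    fix m assume "m \<in> M"
    then have "mh_valid_hist M T j (h @ [(m, deviate i \<tau> m h)])"
      using mh_valid_hist_snoc[OF Suc.prems(1) n(3)] deviate_avail[OF assms(2) Suc.prems(1) n(3)]
      by blast
    then show "mh_cont_util fee M pw (deviate i \<tau>) i n (h @ [(m, deviate i \<tau> m h)])
        \<le> pw i * greedy_value n (dep_pending (h @ [(m, deviate i \<tau> m h)]))"
      by (rule Suc.IH) (use Suc.prems(2) in simp)
    show "0 \<le> pw m" using pw_pos \<open>m \<in> M\<close> by (simp add: less_imp_le)
  qed
  also have "\<dots> \<le> (\<Sum>m\<in>M. pw m * ((if m = i then fee (greedy h) else 0)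
          + pw i * greedy_value n (dep_pending (h @ [(m, greedy h)]))))"
    unfolding n(1)[symmetric]
  proof (intro sum_mono mult_left_mono)
    fix m assume "m \<in> M"
    show "0 \<le> pw m" using pw_pos \<open>m \<in> M\<close> by (simp add: less_imp_le)
  qed (rule deviate_one_shot_le[OF assms(2) Suc.prems(1) n(3) assms(1)])
  also have "\<dots> = pw i * greedy_value (Suc n) (dep_pending h)"
    using greedy_expected_step[OF n(3) assms(1)] unfolding n(1,2) .
  finally show ?case .
qed

lemma mh_SPE_greedy: "mh_SPE f fA fB M pw T j (\<lambda>_. greedy)"
  unfolding mh_SPE_def
proof (intro conjI ballI allI impI)
  show "mh_valid_strategy M T j greedy" for m
    by (rule mh_valid_strategy_greedy)
next
  fix h i \<tau>
  assume "mh_valid_hist M T j h \<and> length h < T \<and> i \<in> M \<and> mh_valid_strategy M T j \<tau>"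
  then have h: "mh_valid_hist M T j h" "length h < T" and i: "i \<in> M"
    and \<tau>: "mh_valid_strategy M T j \<tau>" by auto
  have "mh_cont_util fee M pw (deviate i \<tau>) i (T - length h) h
      \<le> pw i * greedy_value (T - length h) (dep_pending h)"
    using mh_cont_util_deviate_le[OF i \<tau> h(1)] h(2) by simp
  also have "\<dots> = mh_cont_util fee M pw (\<lambda>_. greedy) i (T - length h) h"
    using mh_cont_util_greedy[OF i] h(2) by simp
  finally show "mh_cont_util fee M pw (deviate i \<tau>) i (T - length h) h
      \<le> mh_cont_util fee M pw (\<lambda>_. greedy) i (T - length h) h" .
next
  fix h i m \<tau>
  assume "mh_valid_hist M T j h \<and> length h < T \<and> i \<in> M \<and> m \<in> M \<and> mh_valid_strategy M T j \<tau>"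
  then have h: "mh_valid_hist M T j h" "length h < T" and i: "i \<in> M" and m: "m \<in> M"
    and \<tau>: "mh_valid_strategy M T j \<tau>" by auto
  let ?n = "T - Suc (length h)"
  let ?a = "deviate i \<tau> m h"
  have "mh_valid_hist M T j (h @ [(m, ?a)])"
    using mh_valid_hist_snoc[OF h m deviate_avail[OF \<tau> h]] .
  then have "mh_cont_util fee M pw (deviate i \<tau>) i ?n (h @ [(m, ?a)])
      \<le> pw i * greedy_value ?n (dep_pending (h @ [(m, ?a)]))"
    by (rule mh_cont_util_deviate_le[OF i \<tau>]) (use h(2) in simp)
  then have "mh_dec_util fee M pw T (deviate i \<tau>) i h m
      \<le> (if m = i then fee ?a else 0) + pw i * greedy_value ?n (dep_pending (h @ [(m, ?a)]))"
    unfolding mh_dec_util_def by simp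
  also have "\<dots> \<le> (if m = i then fee (greedy h) else 0)
      + pw i * greedy_value ?n (dep_pending (h @ [(m, greedy h)]))"
    by (rule deviate_one_shot_le[OF \<tau> h i])
  also have "\<dots> = mh_dec_util fee M pw T (\<lambda>_. greedy) i h m"
    unfolding mh_dec_util_def using mh_cont_util_greedy[OF i] h(2) by simp
  finally show "mh_dec_util fee M pw T (deviate i \<tau>) i h m
      \<le> mh_dec_util fee M pw T (\<lambda>_. greedy) i h m" .
qed

lemma mh_SPE_last_round_Incl_Col:
  assumes spe: "mh_SPE f fA fB M pw T j \<sigma>"
    and h: "mh_valid_hist M T j h" "Suc (length h) = T" "\<not> dep_pending h"
    and m: "m \<in> M"
  shows "\<sigma> m h = Incl_Col"
proof -
  define \<tau> where "\<tau> = (\<lambda>h'. if h' = h then Incl_Col else Unrelated)"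
  have "Incl_Col \<notin> snd ` set h"
    using Incl_Col_notin_valid_hist[OF h(1)] h(2) by simp
  then have "mh_valid_strategy M T j \<tau>"
    unfolding mh_valid_strategy_def \<tau>_def using h(2) by (auto simp: mh_avail_def)
  then have "mh_dec_util fee M pw T (\<sigma>(m := \<tau>)) m h m \<le> mh_dec_util fee M pw T \<sigma> m h m"
    using spe h m unfolding mh_SPE_def by auto
  then have "fB \<le> fee (\<sigma> m h)"
    using h(2) unfolding mh_dec_util_def by (simp add: \<tau>_def mh_fee_def)
  moreover have "mh_avail T j h (\<sigma> m h)"
    using spe m h unfolding mh_SPE_def mh_valid_strategy_def by auto
  ultimately show ?thesis
    using f_less_fB h(3) by (cases "\<sigma> m h") (auto simp: mh_avail_def mh_fee_def)
qed

lemma mh_SPE_penultimate_round_Incl_Dep: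
  assumes spe: "mh_SPE f fA fB M pw T j \<sigma>"
    and h: "mh_valid_hist M T j h" "Suc (Suc (length h)) = T" "dep_pending h"
    and m: "m \<in> M"
  shows "\<sigma> m h = Incl_Dep"
proof (rule ccontr)
  assume "\<sigma> m h \<noteq> Incl_Dep"
  moreover have \<sigma>m: "mh_valid_strategy M T j (\<sigma> m)"
    using spe m unfolding mh_SPE_def by auto
  ultimately have "\<sigma> m h = Unrelated"
    using h unfolding mh_valid_strategy_def by (auto simp: mh_avail_def)
  have last: "T - Suc (length h) = Suc 0" "length h < T"
    using h(2) by auto
  define \<tau> where "\<tau> = (\<sigma> m)(h := Incl_Dep)"
  have avail_Dep: "mh_avail T j h Incl_Dep"
    using h j_le by (auto simp: mh_avail_def)
  then have "mh_valid_strategy M T j \<tau>"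
    using \<sigma>m unfolding mh_valid_strategy_def \<tau>_def by auto
  then have le: "mh_dec_util fee M pw T (\<sigma>(m := \<tau>)) m h m \<le> mh_dec_util fee M pw T \<sigma> m h m"
    using spe h m last unfolding mh_SPE_def by auto
  have "\<sigma> m (h @ [(m, Incl_Dep)]) = Incl_Col"
    using mh_SPE_last_round_Incl_Col[OF spe mh_valid_hist_snoc[OF h(1) last(2) m avail_Dep]] h(2) m
    by simp
  then have "mh_dec_util fee M pw T (\<sigma>(m := \<tau>)) m h m = fA + pw m * fB"
    unfolding mh_dec_util_def last mh_cont_util_Suc_0[OF m] by (simp add: \<tau>_def mh_fee_def)
  moreover have "mh_dec_util fee M pw T \<sigma> m h m \<le> f + pw m * max fA fB"
  proof -
    have "fee a \<le> max fA fB" for a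
      using f_less_fA by (cases a) (auto simp: mh_fee_def)
    then have "pw m * fee (\<sigma> m (h @ [(m, Unrelated)])) \<le> pw m * max fA fB"
      using pw_pos[OF m] by (simp add: mult_left_mono)
    then show ?thesis
      unfolding mh_dec_util_def last mh_cont_util_Suc_0[OF m]
      using \<open>\<sigma> m h = Unrelated\<close> by (simp add: mh_fee_def)
  qed
  ultimately show False
    using le Dep_now_beats_Dep_last[OF m] by linarith
qed

lemma mh_SPE_run_includes_Dep_and_Col:
  assumes spe: "mh_SPE f fA fB M pw T j \<sigma>"
    and ms: "set ms \<subseteq> M" "length ms = T" "2 \<le> T"
  shows "Incl_Dep \<in> snd ` set (mh_run \<sigma> [] ms) \<and> Incl_Col \<in> snd ` set (mh_run \<sigma> [] ms)"
proof -
  obtain ms1 b where "ms = ms1 @ [b]"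
    using ms by (cases ms rule: rev_cases) auto
  moreover obtain ms0 a where "ms1 = ms0 @ [a]"
    using ms calculation by (cases ms1 rule: rev_cases) auto
  ultimately have ms_eq: "ms = ms0 @ [a, b]" by simp
  have strategies: "\<forall>m\<in>M. mh_valid_strategy M T j (\<sigma> m)"
    using spe unfolding mh_SPE_def by blast
  define h0 where "h0 = mh_run \<sigma> [] ms0"
  define h1 where "h1 = h0 @ [(a, \<sigma> a h0)]"
  have run0: "mh_valid_hist M T j h0" "Suc (Suc (length h0)) = T"
    using mh_valid_hist_mh_run[OF strategies, of ms0] ms ms_eq
    by (auto simp: h0_def length_mh_run)
  have run1: "mh_valid_hist M T j h1" "Suc (length h1) = T"
    using mh_valid_hist_mh_run[OF strategies, of "ms0 @ [a]"] ms ms_eq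
    by (auto simp: h1_def h0_def mh_run_append length_mh_run)
  have "\<not> dep_pending h1"
  proof (cases "dep_pending h0")
    case True
    then have "\<sigma> a h0 = Incl_Dep"
      using mh_SPE_penultimate_round_Incl_Dep[OF spe run0] ms ms_eq by simp
    then show ?thesis by (simp add: h1_def)
  qed (simp add: h1_def)
  moreover have "\<sigma> b h1 = Incl_Col"
    using mh_SPE_last_round_Incl_Col[OF spe run1 calculation] ms ms_eq by simp
  moreover have "mh_run \<sigma> [] ms = h1 @ [(b, \<sigma> b h1)]"
    by (simp add: ms_eq mh_run_append h1_def h0_def)
  ultimately show ?thesis by force
qed

end

theorem lemma2:
  fixes M :: "'m set" and pw :: "'m \<Rightarrow> real"
    and T j :: nat and f fA fB vdep vcol :: real
  assumes "finite M" and "M \<noteq> {}"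
    and "\<forall>m\<in>M. pw m > 0" and "(\<Sum>m\<in>M. pw m) = 1"
    and "2 \<le> T" and "1 \<le> j" and "j \<le> T - 1"
    and "f < fA" and "fA < vdep"
    and "f < fB" and "fB < vcol"
  shows "(\<exists>\<sigma>. mh_SPE f fA fB M pw T j \<sigma>)
       \<and> (\<forall>\<sigma> ms. mh_SPE f fA fB M pw T j \<sigma> \<and> set ms \<subseteq> M \<and> length ms = T \<longrightarrow>
             (let H = mh_run \<sigma> [] ms in
                Incl_Dep \<in> snd ` set H \<and> Incl_Col \<in> snd ` set H
              \<and> tokens_A vdep fA H = vdep - fA \<and> tokens_B vcol fB H = vcol - fB))"
proof -
  interpret mad_htlc_miners M pw T j f fA fB
    using assms by unfold_locales auto
  show ?thesis
    using mh_SPE_greedy mh_SPE_run_includes_Dep_and_Col \<open>2 \<le> T\<close>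
    by (auto simp: Let_def tokens_A_def tokens_B_def)
qed

end
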